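(* Let $\bar\gamma_M>0$, $\bar\gamma_E>0$ and $0\le\rho<1$, and let $(H_M,H_E)$ be nonnegative random variables with joint density $$f_{H_M,H_E}(h_M,h_E)=\frac{1}{\bar\gamma_M\bar\gamma_E(1-\rho)}\exp\!\left[-\frac{1}{1-\rho}\left(\frac{h_M}{\bar\gamma_M}+\frac{h_E}{\bar\gamma_E}\right)\right]I_0\!\left(\frac{2}{1-\rho}\sqrt{\frac{\rho\,h_M h_E}{\bar\gamma_M\bar\gamma_E}}\right),\qquad h_M,h_E\ge 0,$$ where $I_0(x)=\frac{1}{2\pi}\int_0^{2\pi}e^{x\cos\theta}\,d\theta$, and let $\kappa=\bar\gamma_M/\bar\gamma_E$. For $\bar P>0$ define the secrecy capacity $$C_s(\bar P)=\sup_{P}\ \mathbb{E}\Big[\big(\log(1+H_MP(H_M,H_E))-\log(1+H_EP(H_M,H_E))\big)\mathbf{1}\{H_M>H_E\}\Big],$$ the supremum being over measurable power allocations $P:[0,\infty)^2\to[0,\infty)$ with $\mathbb{E}[P(H_M,H_E)]\le\bar P$. Then, as $\bar P\to\infty$ (i.e. as the SNR grows), $C_s(\bar P)$ converges to the limiting value $$C_s^{\lim}(\kappa,\rho)=\mathbb{E}\!\left[\log\!\frac{H_M}{H_E}\,\mathbf{1}\{H_M>H_E\}\right]=\log(1+\kappa)+\log\!\left(\frac12+\sqrt{\frac14-\frac{\rho\kappa}{(1+\kappa)^2}}\right).$$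
   Context: $H_M$ and $H_E$ are the fading power gains of the main (legitimate) channel and the eavesdropper channel in an ergodic fading wiretap channel with unit-variance Gaussian noise and full channel state information at the transmitter; the given joint density is the correlated (bivariate) Rayleigh model, with exponential marginals of means $\bar\gamma_M,\bar\gamma_E$ and power correlation coefficient $\rho$. $\kappa$ is the average channel gain ratio. The logarithm is taken in a fixed base throughout. *)

theory Defs
  imports "HOL-Probability.Probability"
begin

definition besselI0 :: "real \<Rightarrow> real" where
  "besselI0 x = (1 / (2 * pi)) * integral {0..2 * pi} (\<lambda>\<theta>. exp (x * cos \<theta>))"

definition rayleigh_density :: "real \<Rightarrow> real \<Rightarrow> real \<Rightarrow> real \<times> real \<Rightarrow> real" where
  "rayleigh_density gM gE \<rho> h =
     (if fst h \<ge> 0 \<and> snd h \<ge> 0 then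
        1 / (gM * gE * (1 - \<rho>)) *
        exp (- (1 / (1 - \<rho>)) * (fst h / gM + snd h / gE)) *
        besselI0 (2 / (1 - \<rho>) * sqrt (\<rho> * fst h * snd h / (gM * gE)))
      else 0)"

definition gains_distr :: "real \<Rightarrow> real \<Rightarrow> real \<Rightarrow> (real \<times> real) measure" where
  "gains_distr gM gE \<rho> = density lborel (\<lambda>h. ennreal (rayleigh_density gM gE \<rho> h))"

definition power_allocs :: "real \<Rightarrow> real \<Rightarrow> real \<Rightarrow> real \<Rightarrow> (real \<times> real \<Rightarrow> real) set" where
  "power_allocs gM gE \<rho> Pbar =
     {P. P \<in> borel_measurable borel \<and> (\<forall>h. 0 \<le> P h) \<and>
         (\<integral>\<^sup>+ h. ennreal (P h) \<partial>gains_distr gM gE \<rho>) \<le> ennreal Pbar}"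

text \<open>Ergodic secrecy capacity (logarithm to base b). The integrand is nonnegative a.e.,
  so the expectation is taken as a nonnegative (extended-real) integral.\<close>
definition secrecy_capacity :: "real \<Rightarrow> real \<Rightarrow> real \<Rightarrow> real \<Rightarrow> real \<Rightarrow> ennreal" where
  "secrecy_capacity b gM gE \<rho> Pbar =
     (\<Squnion>P\<in>power_allocs gM gE \<rho> Pbar.
        \<integral>\<^sup>+ h. ennreal ((log b (1 + fst h * P h) - log b (1 + snd h * P h))
                   * indicator {h. fst h > snd h} h) \<partial>gains_distr gM gE \<rho>)"

end

theory Submission
  imports Defs "HOL-Real_Asymp.Real_Asymp"
begin

text \<open>Writing \<open>I\<^sub>0\<close> as an angular average exhibits the joint density as a mixture over
  \<open>\<theta> \<in> [0, 2\<pi>]\<close> of exponentials in \<open>h\<^sub>M\<close>, \<open>h\<^sub>E\<close> and \<open>\<surd>(h\<^sub>M h\<^sub>E) cos \<theta>\<close>. In the coordinates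
  \<open>h = (t w, w)\<close> the exponent is \<open>- w (A - B cos \<theta>)\<close> with \<open>A\<close>, \<open>B\<close> depending only on \<open>t\<close>, so the
  integral over \<open>w\<close> is a Gamma integral and the one over \<open>\<theta>\<close> is
  \<open>\<integral> d\<theta> / (A - B cos \<theta>)\<^sup>2 = 2\<pi>A / (A\<^sup>2 - B\<^sup>2)\<^sup>3\<^sup>/\<^sup>2\<close>. This gives the density of the ratio
  \<open>T = H\<^sub>M / H\<^sub>E\<close> in closed form, with an elementary tail and an elementary antiderivative of
  \<open>ln t\<close> times it, hence the value of \<open>\<bbbE>[log T; T > 1]\<close>.

  For the capacity, \<open>log (1 + x P) - log (1 + y P) \<le> log (x / y)\<close> for \<open>x > y\<close> bounds every
  allocation by this expectation, while the constant allocations \<open>P = n\<close> approach it by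
  monotone convergence.\<close>

lemma Poisson_denominator_eq:
  fixes r x :: real
  shows "1 - 2 * r * cos x + r^2 = (1 - r * cos x)^2 + (r * sin x)^2"
  by (simp add: power_mult_distrib sin_squared_eq power2_diff algebra_simps)

lemma A_minus_B_cos_pos:
  fixes A B x :: real
  assumes "\<bar>B\<bar> < A"
  shows "A - B * cos x > 0"
proof -
  have "\<bar>B * cos x\<bar> \<le> \<bar>B\<bar>"
    using abs_cos_le_one[of x] by (simp add: abs_mult mult_left_le)
  then show ?thesis using assms by linarith
qed

lemma Poisson_denominator_pos:
  fixes r x :: real
  assumes "\<bar>r\<bar> < 1"
  shows "1 - 2 * r * cos x + r^2 > 0"
  unfolding Poisson_denominator_eq
  using A_minus_B_cos_pos[of r 1 x] assms by (smt (verit) zero_le_power2 zero_less_power2)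

lemma arctan_Poisson_antiderivative:
  fixes r :: real
  assumes r: "\<bar>r\<bar> < 1"
  shows "((\<lambda>x. x + 2 * arctan (r * sin x / (1 - r * cos x))) has_real_derivative
           (1 - r^2) / (1 - 2 * r * cos x + r^2)) (at x)"
proof -
  have c: "1 - r * cos x > 0" using A_minus_B_cos_pos[of r 1 x] r by simp
  have p: "1 - 2 * r * cos x + r^2 > 0" using Poisson_denominator_pos[OF r] .
  have arg: "1 + (r * sin x / (1 - r * cos x))^2 = (1 - 2 * r * cos x + r^2) / (1 - r * cos x)^2"
    unfolding Poisson_denominator_eq using c by (simp add: field_simps power_divide)
  \<comment> \<open>the numerator in the raw form produced by \<open>derivative_eq_intros\<close>\<close>
  have num: "(0 * sin x + cos x * 1 * r) * (1 - r * cos x) - r * sin x * (0 - (0 * cos x + - sin x * 1 * r))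
      = r * (cos x - r)"
  proof -
    have "sin x * sin x + cos x * cos x = 1"
      using sin_cos_squared_add[of x] by (simp add: power2_eq_square)
    then show ?thesis by algebra
  qed
  show ?thesis
    apply (rule derivative_eq_intros refl)+
    using c apply simp
      apply (rule refl)+
    unfolding arg num power2_eq_square[of "1 - r * cos x", symmetric]
    using c p by (simp add: divide_simps) (simp add: algebra_simps power2_eq_square)
qed

lemma inverse_A_minus_B_cos_antiderivative:
  fixes A B :: real
  assumes AB: "\<bar>B\<bar> < A"
  defines "s \<equiv> sqrt (A^2 - B^2)"
  defines "r \<equiv> B / (A + s)"
  shows "((\<lambda>x. (x + 2 * arctan (r * sin x / (1 - r * cos x))) / s) has_real_derivative
           1 / (A - B * cos x)) (at x)"
proof -
  have "\<bar>B\<bar>^2 < A^2"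
    using AB by (intro power_strict_mono) auto
  then have "B^2 < A^2" by simp
  then have s: "s > 0" "s^2 = A^2 - B^2" by (auto simp: s_def)
  have As: "A + s > 0" using AB s by linarith
  have Br: "B = r * (A + s)" using As by (simp add: r_def)
  have "(r * r * (A + s)) * (A + s) = (A - s) * (A + s)"
  proof -
    have "(r * r * (A + s)) * (A + s) = B^2" by (simp add: Br power2_eq_square)
    also have "\<dots> = (A - s) * (A + s)" using s(2) by (simp add: power2_eq_square algebra_simps)
    finally show ?thesis .
  qed
  then have rr: "r * r * (A + s) = A - s" using As by simp
  have r: "\<bar>r\<bar> < 1"
  proof -
    have "\<bar>B\<bar> < A + s" using AB s(1) by linarith
    then show ?thesis using As by (simp add: r_def abs_divide pos_divide_less_eq)
  qed
  have q: "A - B * cos x > 0" using A_minus_B_cos_pos[OF AB] .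
  have p: "1 - 2 * r * cos x + r^2 > 0" using Poisson_denominator_pos[OF r] .
  have "(1 - r^2) * (A - B * cos x) - s * (1 - 2 * r * cos x + r^2) = (r * r * (A + s) - (A - s)) * (r * cos x - 1)"
    unfolding Br by (simp add: algebra_simps power2_eq_square)
  then have key: "(1 - r^2) * (A - B * cos x) = s * (1 - 2 * r * cos x + r^2)"
    unfolding rr by simp
  have "(1 - r^2) / (1 - 2 * r * cos x + r^2) / s = 1 / (A - B * cos x)"
    using key p s(1) q by (simp add: divide_simps)
  moreover have "((\<lambda>x. (x + 2 * arctan (r * sin x / (1 - r * cos x))) / s) has_real_derivative
      (1 - r^2) / (1 - 2 * r * cos x + r^2) / s) (at x)"
    by (rule DERIV_cdivide[OF arctan_Poisson_antiderivative[OF r]])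
  ultimately show ?thesis by simp
qed

lemma nn_integral_indicator_has_integral:
  fixes f :: "real \<Rightarrow> real"
  assumes "(f has_integral I) {a..b}" and "\<And>x. x \<in> {a..b} \<Longrightarrow> 0 \<le> f x"
  shows "(\<integral>\<^sup>+x. ennreal (f x) * indicator {a..b} x \<partial>lborel) = ennreal I"
proof -
  have "(\<integral>\<^sup>+x. ennreal (f x) * indicator {a..b} x \<partial>lborel)
      = (\<integral>\<^sup>+x. ennreal (indicator {a..b} x * f x) \<partial>lborel)"
    by (intro nn_integral_cong) (auto split: split_indicator)
  also have "\<dots> = ennreal I"
    using assms by (intro nn_integral_has_integral_lebesgue) auto
  finally show ?thesis .
qed

lemma nn_integral_inverse_A_minus_B_cos_sq:
  fixes A B :: real
  assumes AB: "\<bar>B\<bar> < A"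
  shows "(\<integral>\<^sup>+\<theta>. ennreal (1 / (A - B * cos \<theta>)^2) * indicator {0..2*pi} \<theta> \<partial>lborel)
          = ennreal (2 * pi * A / (sqrt (A^2 - B^2))^3)"
proof -
  define s where "s = sqrt (A^2 - B^2)"
  define r where "r = B / (A + s)"
  define F1 where "F1 x = (x + 2 * arctan (r * sin x / (1 - r * cos x))) / s" for x
  define F2 where "F2 x = (B * sin x / (A - B * cos x) + A * F1 x) / s^2" for x
  have "\<bar>B\<bar>^2 < A^2"
    using AB by (intro power_strict_mono) auto
  then have s: "s > 0" "s^2 = A^2 - B^2" by (auto simp: s_def)
  have q: "A - B * cos x > 0" for x using A_minus_B_cos_pos[OF AB] .
  have dF1: "(F1 has_real_derivative 1 / (A - B * cos x)) (at x)" for x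
    unfolding F1_def[abs_def] r_def s_def by (rule inverse_A_minus_B_cos_antiderivative[OF AB])
  have dF2: "(F2 has_real_derivative 1 / (A - B * cos x)^2) (at x)" for x
  proof -
    have "((\<lambda>x. B * sin x / (A - B * cos x)) has_real_derivative
        (B * cos x * (A - B * cos x) - B * sin x * (B * sin x)) / (A - B * cos x)^2) (at x)"
      apply (rule derivative_eq_intros refl)+
      using q[of x] apply (auto simp: power2_eq_square)
      done
    then have "(F2 has_real_derivative ((B * cos x * (A - B * cos x) - B * sin x * (B * sin x)) / (A - B * cos x)^2
             + A * (1 / (A - B * cos x))) / s^2) (at x)"
      unfolding F2_def[abs_def] by (intro DERIV_cdivide DERIV_add DERIV_cmult dF1)
    moreover have "(B * cos x * (A - B * cos x) - B * sin x * (B * sin x)) / (A - B * cos x)^2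
             + A * (1 / (A - B * cos x)) = s^2 / (A - B * cos x)^2"
    proof -
      have "sin x * sin x + cos x * cos x = 1"
        using sin_cos_squared_add[of x] by (simp add: power2_eq_square)
      then show ?thesis
        unfolding s(2) using q[of x] by (simp add: divide_simps) algebra
    qed
    ultimately show ?thesis using s(1) by simp
  qed
  have "((\<lambda>x. 1 / (A - B * cos x)^2) has_integral (F2 (2*pi) - F2 0)) {0..2*pi}"
    by (rule fundamental_theorem_of_calculus)
      (auto intro: DERIV_subset dF2 simp: has_real_derivative_iff_has_vector_derivative[symmetric])
  moreover have "F2 (2*pi) - F2 0 = 2 * pi * A / s^3"
    using s(1) by (simp add: F2_def F1_def field_simps power2_eq_square power3_eq_cube)
  ultimately show ?thesis
    unfolding s_def by (intro nn_integral_indicator_has_integral) auto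
qed

lemma nn_integral_mult_exp_neg:
  fixes q :: real
  assumes q: "q > 0"
  shows "(\<integral>\<^sup>+w. ennreal (w * exp (- q * w)) * indicator {0..} w \<partial>lborel) = ennreal (1 / q^2)"
proof -
  have "(\<integral>\<^sup>+w. ennreal (w * exp (- q * w)) * indicator {0..} w \<partial>lborel) =
        0 - (- (1 + q * 0) * exp (- q * 0) / q^2)"
  proof (rule nn_integral_FTC_atLeast)
    show "((\<lambda>w. - (1 + q * w) * exp (- q * w) / q^2) has_real_derivative x * exp (- q * x)) (at x)" for x
      apply (rule derivative_eq_intros refl)+
      using q by (simp add: divide_simps) (use q in \<open>simp add: algebra_simps power2_eq_square\<close>)
    show "((\<lambda>w. - (1 + q * w) * exp (- q * w) / q^2) \<longlongrightarrow> 0) at_top"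
      using q by real_asymp
  qed auto
  then show ?thesis by simp
qed

lemma besselI0_eq_nn_integral:
  "ennreal (besselI0 x) = (\<integral>\<^sup>+\<theta>. ennreal (exp (x * cos \<theta>) / (2 * pi)) * indicator {0..2*pi} \<theta> \<partial>lborel)"
proof -
  have "((\<lambda>\<theta>. exp (x * cos \<theta>) / (2 * pi)) has_integral
      integral {0..2*pi} (\<lambda>\<theta>. exp (x * cos \<theta>)) / (2 * pi)) {0..2*pi}"
    by (intro has_integral_divide integrable_integral integrable_continuous_interval continuous_intros)
  then have "((\<lambda>\<theta>. exp (x * cos \<theta>) / (2 * pi)) has_integral besselI0 x) {0..2*pi}"
    by (simp add: besselI0_def)
  then show ?thesis
    by (subst nn_integral_indicator_has_integral) auto
qed

text \<open>With \<open>a = 1 / gM\<close> and \<open>e = 1 / gE\<close>, \<open>ratio_density\<close> is the density of \<open>H\<^sub>M / H\<^sub>E\<close> on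
  \<open>[0, \<infinity>)\<close> and \<open>ratio_tail t\<close> its tail probability \<open>P(H\<^sub>M / H\<^sub>E > t)\<close>.\<close>
definition ratio_disc :: "real \<Rightarrow> real \<Rightarrow> real \<Rightarrow> real \<Rightarrow> real" where
  "ratio_disc a e \<rho> t = (a * t + e)^2 - 4 * \<rho> * a * e * t"

definition ratio_density :: "real \<Rightarrow> real \<Rightarrow> real \<Rightarrow> real \<Rightarrow> real" where
  "ratio_density a e \<rho> t = a * e * (1 - \<rho>) * (a * t + e) / (sqrt (ratio_disc a e \<rho> t))^3"

definition ratio_tail :: "real \<Rightarrow> real \<Rightarrow> real \<Rightarrow> real \<Rightarrow> real" where
  "ratio_tail a e \<rho> t = (1 - (a * t - e) / sqrt (ratio_disc a e \<rho> t)) / 2"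

lemma ratio_density_measurable[measurable]: "ratio_density a e \<rho> \<in> borel_measurable borel"
  unfolding ratio_density_def ratio_disc_def by measurable

lemma ratio_disc_eq_square_plus:
  "ratio_disc a e \<rho> t = (a * t - e)^2 + 4 * (1 - \<rho>) * a * e * t"
  unfolding ratio_disc_def by (simp add: power2_eq_square algebra_simps)

lemma ratio_disc_pos:
  assumes "a > 0" "e > 0" "\<rho> < 1" "t \<ge> 0"
  shows "ratio_disc a e \<rho> t > 0"
proof -
  have "4 * (1 - \<rho>) * a * e * t \<ge> 0" using assms by simp
  moreover have "(a * t - e)^2 > 0 \<or> 4 * (1 - \<rho>) * a * e * t > 0"
    using assms by (cases "t = 0") auto
  ultimately show ?thesis
    unfolding ratio_disc_eq_square_plus by (smt (verit) zero_le_power2)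
qed

lemma sqrt_ratio_disc_ge:
  assumes "a > 0" "e > 0" "\<rho> \<le> 1" "t \<ge> 0"
  shows "\<bar>a * t - e\<bar> \<le> sqrt (ratio_disc a e \<rho> t)"
proof -
  have "(a * t - e)^2 \<le> ratio_disc a e \<rho> t"
    unfolding ratio_disc_eq_square_plus using assms by simp
  then show ?thesis using real_sqrt_le_mono by fastforce
qed

lemma sqrt_ratio_disc_has_derivative:
  assumes "ratio_disc a e \<rho> t > 0"
  shows "((\<lambda>t. sqrt (ratio_disc a e \<rho> t)) has_real_derivative
           (a * (a * t + e) - 2 * \<rho> * a * e) / sqrt (ratio_disc a e \<rho> t)) (at t)"
proof -
  have dD: "(ratio_disc a e \<rho> has_real_derivative 2 * (a * (a * t + e) - 2 * \<rho> * a * e)) (at t)"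
    unfolding ratio_disc_def by (rule derivative_eq_intros refl)+ (simp add: algebra_simps)
  have eq: "inverse (sqrt (ratio_disc a e \<rho> t)) / 2 * (2 * (a * (a * t + e) - 2 * \<rho> * a * e))
      = (a * (a * t + e) - 2 * \<rho> * a * e) / sqrt (ratio_disc a e \<rho> t)"
    by (simp add: divide_simps)
  show ?thesis
    using DERIV_chain2[OF DERIV_real_sqrt[OF assms] dD] unfolding eq .
qed

lemma ratio_tail_has_derivative:
  assumes D: "ratio_disc a e \<rho> t > 0"
  shows "((\<lambda>t. - ratio_tail a e \<rho> t) has_real_derivative ratio_density a e \<rho> t) (at t)"
proof -
  define X where "X = sqrt (ratio_disc a e \<rho> t)"
  define K where "K = a * (a * t + e) - 2 * \<rho> * a * e"
  have X: "X > 0" "X^2 = ratio_disc a e \<rho> t" using D by (auto simp: X_def)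
  have "((\<lambda>t. a * t - e) has_real_derivative a) (at t)"
    by (rule derivative_eq_intros refl)+ simp
  from DERIV_divide[OF this sqrt_ratio_disc_has_derivative[OF D]]
  have "((\<lambda>t. (a * t - e) / sqrt (ratio_disc a e \<rho> t)) has_real_derivative
      (a * X - (a * t - e) * (K / X)) / X^2) (at t)"
    using X(1) by (simp add: X_def K_def power2_eq_square)
  from DERIV_cdivide[OF DERIV_diff[OF this DERIV_const[of 1 "at t"]], of 2]
  have "((\<lambda>t. ((a * t - e) / sqrt (ratio_disc a e \<rho> t) - 1) / 2) has_real_derivative
      ((a * X - (a * t - e) * (K / X)) / X^2) / 2) (at t)"
    by simp
  moreover have "(\<lambda>t. ((a * t - e) / sqrt (ratio_disc a e \<rho> t) - 1) / 2) = (\<lambda>t. - ratio_tail a e \<rho> t)"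
    by (auto simp: ratio_tail_def fun_eq_iff minus_divide_left)
  moreover have "((a * X - (a * t - e) * (K / X)) / X^2) / 2 = ratio_density a e \<rho> t"
  proof -
    have "((a * X - (a * t - e) * (K / X)) / X^2) / 2 = (a * X^2 - (a * t - e) * K) / (2 * X^3)"
      using X(1) by (simp add: field_simps power2_eq_square power3_eq_cube)
    also have "a * X^2 - (a * t - e) * K = 2 * (a * e * (1 - \<rho>) * (a * t + e))"
      unfolding X(2) ratio_disc_def K_def by (simp add: power2_eq_square algebra_simps)
    finally show ?thesis
      unfolding ratio_density_def X_def[symmetric] using X(1) by simp
  qed
  ultimately show ?thesis by simp
qed

lemma ratio_density_nonneg:
  assumes "a > 0" "e > 0" "\<rho> < 1" "t \<ge> 0"
  shows "ratio_density a e \<rho> t \<ge> 0"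
  unfolding ratio_density_def using assms ratio_disc_pos[OF assms]
  by (intro divide_nonneg_nonneg mult_nonneg_nonneg) auto

lemma nn_integral_ratio_density:
  assumes a: "a > 0" and e: "e > 0" and r: "0 \<le> \<rho>" "\<rho> < 1"
  shows "(\<integral>\<^sup>+t. ennreal (ratio_density a e \<rho> t) * indicator {0..} t \<partial>lborel) = 1"
proof -
  have "(\<integral>\<^sup>+t. ennreal (ratio_density a e \<rho> t) * indicator {0..} t \<partial>lborel)
      = 0 - (- ratio_tail a e \<rho> 0)"
  proof (rule nn_integral_FTC_atLeast)
    show "ratio_density a e \<rho> \<in> borel_measurable borel" by measurable
    show "((\<lambda>t. - ratio_tail a e \<rho> t) \<longlongrightarrow> 0) at_top"
      unfolding ratio_tail_def ratio_disc_def using a e r by real_asymp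
  qed (use ratio_tail_has_derivative ratio_disc_pos ratio_density_nonneg a e r in auto)
  also have "ratio_tail a e \<rho> 0 = 1" using e by (simp add: ratio_tail_def ratio_disc_def)
  finally show ?thesis by simp
qed

lemma ratio_log_args_pos:
  assumes a: "a > 0" and e: "e > 0" and r: "0 \<le> \<rho>" "\<rho> < 1" and t: "t > 0"
  shows "sqrt (ratio_disc a e \<rho> t) + a * t + e - 2 * \<rho> * e > 0"
    and "sqrt (ratio_disc a e \<rho> t) + a * t + e - 2 * \<rho> * a * t > 0"
proof -
  have X: "\<bar>a * t - e\<bar> \<le> sqrt (ratio_disc a e \<rho> t)"
    using sqrt_ratio_disc_ge[OF a e] r t by simp
  have "\<rho> * e < e" "\<rho> * (a * t) < a * t"
    using r e a t by (simp_all add: mult_less_cancel_right1)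
  then show "sqrt (ratio_disc a e \<rho> t) + a * t + e - 2 * \<rho> * e > 0"
    and "sqrt (ratio_disc a e \<rho> t) + a * t + e - 2 * \<rho> * a * t > 0"
    using X by (simp_all add: mult.assoc)
qed

lemma ln_ratio_log_arg1_has_derivative:
  assumes a: "a > 0" and e: "e > 0" and r: "0 \<le> \<rho>" "\<rho> < 1" and t: "t > 0"
  shows "((\<lambda>t. ln (sqrt (ratio_disc a e \<rho> t) + a * t + e - 2 * \<rho> * e)) has_real_derivative
           a / sqrt (ratio_disc a e \<rho> t)) (at t)"
proof -
  define X where "X = sqrt (ratio_disc a e \<rho> t)"
  define K where "K = a * (a * t + e) - 2 * \<rho> * a * e"
  define P where "P = X + a * t + e - 2 * \<rho> * e"
  have X: "X > 0" using ratio_disc_pos[OF a e] r t by (simp add: X_def)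
  have P: "P > 0" using ratio_log_args_pos(1)[OF a e r t] by (simp add: P_def X_def)
  have dX: "((\<lambda>t. sqrt (ratio_disc a e \<rho> t)) has_real_derivative K / X) (at t)"
    unfolding X_def K_def using ratio_disc_pos[OF a e] r t by (intro sqrt_ratio_disc_has_derivative) auto
  have "((\<lambda>t. sqrt (ratio_disc a e \<rho> t) + a * t + e - 2 * \<rho> * e) has_real_derivative K / X + a) (at t)"
    by (rule derivative_eq_intros refl dX)+ simp
  from DERIV_chain2[OF DERIV_ln[OF P[unfolded P_def X_def]] this]
  have "((\<lambda>t. ln (sqrt (ratio_disc a e \<rho> t) + a * t + e - 2 * \<rho> * e)) has_real_derivative
      inverse P * (K / X + a)) (at t)"
    by (simp add: P_def X_def)
  moreover have "K + a * X = a * P" unfolding K_def P_def by (simp add: algebra_simps)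
  then have "inverse P * (K / X + a) = a / X" using X P by (simp add: field_simps)
  ultimately show ?thesis by (simp add: X_def)
qed

lemma ln_ratio_log_arg2_has_derivative:
  assumes a: "a > 0" and e: "e > 0" and r: "0 \<le> \<rho>" "\<rho> < 1" and t: "t > 0"
  shows "((\<lambda>t. ln (sqrt (ratio_disc a e \<rho> t) + a * t + e - 2 * \<rho> * a * t)) has_real_derivative
           (sqrt (ratio_disc a e \<rho> t) - e) / (t * sqrt (ratio_disc a e \<rho> t))) (at t)"
proof -
  define X where "X = sqrt (ratio_disc a e \<rho> t)"
  define K where "K = a * (a * t + e) - 2 * \<rho> * a * e"
  define P where "P = X + a * t + e - 2 * \<rho> * a * t"
  have D: "ratio_disc a e \<rho> t > 0" using ratio_disc_pos[OF a e r(2)] t by simp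
  then have X: "X > 0" "X^2 = ratio_disc a e \<rho> t" by (simp_all add: X_def)
  have P: "P > 0" using ratio_log_args_pos(2)[OF a e r t] by (simp add: P_def X_def)
  have dX: "((\<lambda>t. sqrt (ratio_disc a e \<rho> t)) has_real_derivative K / X) (at t)"
    unfolding X_def K_def using ratio_disc_pos[OF a e] r t by (intro sqrt_ratio_disc_has_derivative) auto
  have dP: "((\<lambda>t. sqrt (ratio_disc a e \<rho> t) + a * t + e - 2 * \<rho> * a * t) has_real_derivative
      K / X + a - 2 * \<rho> * a) (at t)"
    by (rule derivative_eq_intros refl dX)+ simp
  have eq: "t * (K + (a - 2 * \<rho> * a) * X) = (X - e) * P"
  proof -
    have "(X - e) * P = X^2 + X * (a * t - 2 * \<rho> * a * t) - e * (a * t + e - 2 * \<rho> * a * t)"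
      unfolding P_def by (simp add: power2_eq_square algebra_simps)
    then show ?thesis unfolding X(2) ratio_disc_def K_def by (simp add: power2_eq_square algebra_simps)
  qed
  have "inverse P * (K / X + a - 2 * \<rho> * a) = t * (K + (a - 2 * \<rho> * a) * X) / (t * X * P)"
    using X(1) P t by (simp add: field_simps)
  also have "\<dots> = (X - e) / (t * X)"
    unfolding eq using P by simp
  finally show ?thesis
    using DERIV_chain2[OF DERIV_ln[OF P[unfolded P_def X_def]] dP] by (simp add: P_def X_def)
qed

text \<open>Integration by parts against the tail: the derivative of \<open>- ln t * ratio_tail t\<close> is
  \<open>ln t * ratio_density t - ratio_tail t / t\<close>, and the remaining terms are an elementary
  antiderivative of \<open>ratio_tail t / t\<close>.\<close>
definition ratio_log_antideriv :: "real \<Rightarrow> real \<Rightarrow> real \<Rightarrow> real \<Rightarrow> real" where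
  "ratio_log_antideriv a e \<rho> t =
     - ln t * ratio_tail a e \<rho> t + ln t
     - ln (sqrt (ratio_disc a e \<rho> t) + a * t + e - 2 * \<rho> * e) / 2
     - ln (sqrt (ratio_disc a e \<rho> t) + a * t + e - 2 * \<rho> * a * t) / 2"

lemma ratio_log_antideriv_has_derivative:
  assumes a: "a > 0" and e: "e > 0" and r: "0 \<le> \<rho>" "\<rho> < 1" and t: "t > 0"
  shows "(ratio_log_antideriv a e \<rho> has_real_derivative ln t * ratio_density a e \<rho> t) (at t)"
proof -
  define X where "X = sqrt (ratio_disc a e \<rho> t)"
  have D: "ratio_disc a e \<rho> t > 0" using ratio_disc_pos[OF a e r(2)] t by simp
  then have X: "X > 0" by (simp add: X_def)
  have "(ratio_tail a e \<rho> has_real_derivative - ratio_density a e \<rho> t) (at t)"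
    using DERIV_minus[OF ratio_tail_has_derivative[OF D]] by simp
  from DERIV_mult[OF DERIV_ln_divide[OF t] this]
  have "((\<lambda>t. ln t * ratio_tail a e \<rho> t) has_real_derivative
      1 / t * ratio_tail a e \<rho> t - ln t * ratio_density a e \<rho> t) (at t)"
    by (simp add: mult_ac)
  then have "(ratio_log_antideriv a e \<rho> has_real_derivative
      - (1 / t * ratio_tail a e \<rho> t - ln t * ratio_density a e \<rho> t) + 1 / t
        - (a / X) / 2 - ((X - e) / (t * X)) / 2) (at t)"
    unfolding ratio_log_antideriv_def[abs_def] X_def minus_mult_left[symmetric]
    by (intro DERIV_diff DERIV_add DERIV_minus DERIV_cdivide DERIV_ln_divide t
        ln_ratio_log_arg1_has_derivative[OF a e r t] ln_ratio_log_arg2_has_derivative[OF a e r t])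
  moreover have "1 / t * ratio_tail a e \<rho> t = 1 / t - (a / X) / 2 - ((X - e) / (t * X)) / 2"
    unfolding ratio_tail_def X_def[symmetric] using X t by (simp add: field_simps)
  ultimately show ?thesis by simp
qed

lemma ratio_log_antideriv_tendsto:
  assumes a: "a > 0" and e: "e > 0" and r: "0 \<le> \<rho>" "\<rho> < 1"
  shows "(ratio_log_antideriv a e \<rho> \<longlongrightarrow> - ln ((1 - \<rho>) * (2 * a)^2) / 2) at_top"
proof -
  have "(ratio_log_antideriv a e \<rho> \<longlongrightarrow> - ln (2 * a) / 2 - ln (2 * a - 2 * \<rho> * a) / 2) at_top"
    unfolding ratio_log_antideriv_def ratio_tail_def ratio_disc_def using a e r by real_asymp
  moreover have "- ln (2 * a) / 2 - ln (2 * a - 2 * \<rho> * a) / 2 = - ln ((1 - \<rho>) * (2 * a)^2) / 2"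
  proof -
    have "2 * a - 2 * \<rho> * a > 0" using a r by (simp add: algebra_simps)
    then have "ln (2 * a) + ln (2 * a - 2 * \<rho> * a) = ln ((2 * a) * (2 * a - 2 * \<rho> * a))"
      using a by (simp add: ln_mult)
    also have "(2 * a) * (2 * a - 2 * \<rho> * a) = (1 - \<rho>) * (2 * a)^2"
      by (simp add: power2_eq_square algebra_simps)
    finally show ?thesis by linarith
  qed
  ultimately show ?thesis by simp
qed

lemma ratio_log_antideriv_one:
  assumes a: "a > 0" and e: "e > 0" and r: "0 \<le> \<rho>" "\<rho> < 1"
  defines "S \<equiv> sqrt ((a + e)^2 - 4 * \<rho> * a * e)"
  shows "ratio_log_antideriv a e \<rho> 1 = - ln ((1 - \<rho>) * (a + e + S)^2) / 2"
proof -
  have D1: "ratio_disc a e \<rho> 1 = (a + e)^2 - 4 * \<rho> * a * e" by (simp add: ratio_disc_def)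
  have S: "S^2 = (a + e)^2 - 4 * \<rho> * a * e"
    using ratio_disc_pos[OF a e r(2), of 1] D1 by (simp add: S_def)
  have pos: "S + a + e - 2 * \<rho> * e > 0" "S + a + e - 2 * \<rho> * a > 0"
    using ratio_log_args_pos[OF a e r, of 1] by (simp_all add: D1 S_def)
  have "ln (S + a + e - 2 * \<rho> * e) + ln (S + a + e - 2 * \<rho> * a)
      = ln ((S + a + e - 2 * \<rho> * e) * (S + a + e - 2 * \<rho> * a))"
    by (rule ln_mult_pos[OF pos, symmetric])
  also have "(S + a + e - 2 * \<rho> * e) * (S + a + e - 2 * \<rho> * a) = (1 - \<rho>) * (a + e + S)^2"
    using S by algebra
  finally have "ln (S + a + e - 2 * \<rho> * e) + ln (S + a + e - 2 * \<rho> * a) = ln ((1 - \<rho>) * (a + e + S)^2)" .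
  then show ?thesis
    unfolding ratio_log_antideriv_def D1 S_def[symmetric] by simp
qed

lemma nn_integral_ln_ratio_density:
  assumes a: "a > 0" and e: "e > 0" and r: "0 \<le> \<rho>" "\<rho> < 1"
  shows "(\<integral>\<^sup>+t. ennreal (ln t * ratio_density a e \<rho> t) * indicator {1..} t \<partial>lborel)
     = ennreal (ln ((a + e + sqrt ((a + e)^2 - 4 * \<rho> * a * e)) / (2 * a)))"
proof -
  define S where "S = sqrt ((a + e)^2 - 4 * \<rho> * a * e)"
  have "(\<integral>\<^sup>+t. ennreal (ln t * ratio_density a e \<rho> t) * indicator {1..} t \<partial>lborel)
     = ennreal (- ln ((1 - \<rho>) * (2 * a)^2) / 2 - ratio_log_antideriv a e \<rho> 1)"
  proof (rule nn_integral_FTC_atLeast)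
    show "(\<lambda>t. ln t * ratio_density a e \<rho> t) \<in> borel_measurable borel" by measurable
  qed (use ratio_log_antideriv_has_derivative ratio_density_nonneg ratio_log_antideriv_tendsto a e r
       in auto)
  also have "- ln ((1 - \<rho>) * (2 * a)^2) / 2 - ratio_log_antideriv a e \<rho> 1
      = (ln ((1 - \<rho>) * (a + e + S)^2) - ln ((1 - \<rho>) * (2 * a)^2)) / 2"
    unfolding ratio_log_antideriv_one[OF a e r] S_def by (simp add: field_simps)
  also have "\<dots> = ln ((a + e + S) / (2 * a))"
  proof -
    have "(a + e)^2 - 4 * \<rho> * a * e > 0"
      using ratio_disc_pos[OF a e r(2), of 1] by (simp add: ratio_disc_def)
    then have "a + e + S > 0" using a e by (simp add: S_def add_pos_nonneg)
    moreover have "ln (4::real) = 2 * ln 2" using ln_realpow[of 2 2] by simp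
    ultimately show ?thesis
      using a r by (simp add: ln_mult_pos ln_divide_pos ln_realpow)
  qed
  finally show ?thesis by (simp add: S_def)
qed

definition rayleigh_kernel :: "real \<Rightarrow> real \<Rightarrow> real \<Rightarrow> real \<times> real \<Rightarrow> real \<Rightarrow> real" where
  "rayleigh_kernel gM gE \<rho> h \<theta> = (if fst h \<ge> 0 \<and> snd h \<ge> 0 then
     1 / (gM * gE * (1 - \<rho>)) * exp (- (1 / (1 - \<rho>)) * (fst h / gM + snd h / gE)) *
     (exp (2 / (1 - \<rho>) * sqrt (\<rho> * fst h * snd h / (gM * gE)) * cos \<theta>) / (2 * pi)) else 0)"

lemma rayleigh_kernel_measurable[measurable (raw)]:
  fixes p :: "'z \<Rightarrow> real \<times> real"
  assumes p: "p \<in> borel_measurable M" and [measurable]: "q \<in> borel_measurable M"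
  shows "(\<lambda>x. rayleigh_kernel gM gE \<rho> (p x) (q x)) \<in> borel_measurable M"
proof -
  have [measurable]: "p \<in> M \<rightarrow>\<^sub>M borel \<Otimes>\<^sub>M borel" using p unfolding borel_prod .
  show ?thesis unfolding rayleigh_kernel_def by measurable
qed

lemma rayleigh_density_eq_nn_integral_kernel:
  assumes "gM > 0" "gE > 0" "\<rho> < 1"
  shows "ennreal (rayleigh_density gM gE \<rho> h) =
         (\<integral>\<^sup>+\<theta>. ennreal (rayleigh_kernel gM gE \<rho> h \<theta>) * indicator {0..2*pi} \<theta> \<partial>lborel)"
proof (cases "fst h \<ge> 0 \<and> snd h \<ge> 0")
  case True
  define c where "c = 1 / (gM * gE * (1 - \<rho>)) * exp (- (1 / (1 - \<rho>)) * (fst h / gM + snd h / gE))"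
  define x where "x = 2 / (1 - \<rho>) * sqrt (\<rho> * fst h * snd h / (gM * gE))"
  have c: "c \<ge> 0" using assms by (simp add: c_def)
  have "rayleigh_density gM gE \<rho> h = c * besselI0 x"
    using True by (simp add: rayleigh_density_def c_def x_def)
  then have "ennreal (rayleigh_density gM gE \<rho> h) = ennreal c * ennreal (besselI0 x)"
    using c by (simp add: ennreal_mult')
  also have "\<dots> = (\<integral>\<^sup>+\<theta>. ennreal c * (ennreal (exp (x * cos \<theta>) / (2 * pi)) * indicator {0..2*pi} \<theta>) \<partial>lborel)"
    by (simp add: besselI0_eq_nn_integral nn_integral_cmult)
  also have "\<dots> = (\<integral>\<^sup>+\<theta>. ennreal (rayleigh_kernel gM gE \<rho> h \<theta>) * indicator {0..2*pi} \<theta> \<partial>lborel)"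
  proof (intro nn_integral_cong)
    fix \<theta>
    have "rayleigh_kernel gM gE \<rho> h \<theta> = c * (exp (x * cos \<theta>) / (2 * pi))"
      using True by (simp add: rayleigh_kernel_def c_def x_def)
    then show "ennreal c * (ennreal (exp (x * cos \<theta>) / (2 * pi)) * indicator {0..2*pi} \<theta>) =
        ennreal (rayleigh_kernel gM gE \<rho> h \<theta>) * indicator {0..2*pi} \<theta>"
      by (simp only: ennreal_mult'[OF c] mult.assoc)
  qed
  finally show ?thesis .
next
  case False
  then have "\<And>\<theta>. rayleigh_kernel gM gE \<rho> h \<theta> = 0" "rayleigh_density gM gE \<rho> h = 0"
    by (auto simp: rayleigh_density_def rayleigh_kernel_def)
  then show ?thesis by simp
qed

lemma rayleigh_density_measurable[measurable]:
  assumes "gM > 0" "gE > 0" "\<rho> < 1"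
  shows "(\<lambda>h. ennreal (rayleigh_density gM gE \<rho> h)) \<in> borel_measurable borel"
  by (subst rayleigh_density_eq_nn_integral_kernel[OF assms]) measurable

definition ratio_kernel :: "real \<Rightarrow> real \<Rightarrow> real \<Rightarrow> real \<Rightarrow> real \<Rightarrow> real \<Rightarrow> real" where
  "ratio_kernel gM gE \<rho> t w \<theta> = (if t \<ge> 0 then 1 / (gM * gE * (1 - \<rho>)) / (2 * pi) *
     exp (- w * ((t / gM + 1 / gE) / (1 - \<rho>) - 2 / (1 - \<rho>) * sqrt (\<rho> * t / (gM * gE)) * cos \<theta>))
     else 0)"

lemma ratio_kernel_measurable[measurable (raw)]:
  assumes [measurable]: "f \<in> borel_measurable M" "g \<in> borel_measurable M" "h \<in> borel_measurable M"
  shows "(\<lambda>x. ratio_kernel gM gE \<rho> (f x) (g x) (h x)) \<in> borel_measurable M"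
  unfolding ratio_kernel_def by measurable

lemma rayleigh_kernel_ratio_coords:
  assumes w: "w > 0"
  shows "rayleigh_kernel gM gE \<rho> (t * w, w) \<theta> = ratio_kernel gM gE \<rho> t w \<theta>"
proof (cases "t \<ge> 0")
  case True
  have "sqrt (\<rho> * (t * w) * w / (gM * gE)) = sqrt (w^2) * sqrt (\<rho> * t / (gM * gE))"
    unfolding real_sqrt_mult[symmetric] by (simp add: power2_eq_square mult_ac)
  then have "sqrt (\<rho> * (t * w) * w / (gM * gE)) = w * sqrt (\<rho> * t / (gM * gE))"
    using w by simp
  then show ?thesis
    using True w unfolding rayleigh_kernel_def ratio_kernel_def
    by (simp add: mult_exp_exp algebra_simps diff_divide_distrib add_divide_distrib)
next
  case False
  then have "t * w < 0" using w by (simp add: mult_neg_pos)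
  then show ?thesis using False by (simp add: rayleigh_kernel_def ratio_kernel_def)
qed

lemma ratio_kernel_coeffs:
  assumes gM: "gM > 0" and gE: "gE > 0" and r: "0 \<le> \<rho>" "\<rho> < 1" and t: "t \<ge> 0"
  defines "A \<equiv> (t / gM + 1 / gE) / (1 - \<rho>)"
    and "B \<equiv> 2 / (1 - \<rho>) * sqrt (\<rho> * t / (gM * gE))"
    and "C \<equiv> 1 / (gM * gE * (1 - \<rho>)) / (2 * pi)"
  shows "ratio_kernel gM gE \<rho> t w \<theta> = C * exp (- (A - B * cos \<theta>) * w)"
    and "\<bar>B\<bar> < A"
    and "C * (2 * pi * A / (sqrt (A^2 - B^2))^3) = ratio_density (1 / gM) (1 / gE) \<rho> t"
proof -
  show "ratio_kernel gM gE \<rho> t w \<theta> = C * exp (- (A - B * cos \<theta>) * w)"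
    using t unfolding ratio_kernel_def A_def B_def C_def by (simp add: mult.commute right_diff_distrib)
  have B: "B \<ge> 0" "B^2 = 4 * \<rho> * t / (gM * gE) / (1 - \<rho>)^2"
    unfolding B_def using gM gE r t by (simp_all add: power_mult_distrib power_divide)
  have AB: "A^2 - B^2 = ratio_disc (1 / gM) (1 / gE) \<rho> t / (1 - \<rho>)^2"
    unfolding B(2) A_def ratio_disc_def using r by (simp add: power_divide diff_divide_distrib)
  define X where "X = sqrt (ratio_disc (1 / gM) (1 / gE) \<rho> t)"
  have D: "ratio_disc (1 / gM) (1 / gE) \<rho> t > 0"
    using ratio_disc_pos[of "1 / gM" "1 / gE" \<rho> t] gM gE r t by simp
  then have "A^2 - B^2 > 0" unfolding AB using r by simp
  moreover have "A > 0" unfolding A_def using gM gE r t by (simp add: add_nonneg_pos)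
  ultimately show "\<bar>B\<bar> < A" using B(1) by (simp add: power_less_imp_less_base)
  have s: "sqrt (A^2 - B^2) = X / (1 - \<rho>)"
    unfolding AB X_def using r by (simp add: real_sqrt_divide)
  have "X > 0" using D by (simp add: X_def)
  moreover have "1 / (g * k) / (2 * pi) * (2 * pi * (u / k) / (X / k)^3) = k * u / (g * X^3)"
    if "k > 0" "X > 0" for g k u X :: real
    using that by (simp add: power_divide) (simp add: field_simps power3_eq_cube)
  ultimately show "C * (2 * pi * A / (sqrt (A^2 - B^2))^3) = ratio_density (1 / gM) (1 / gE) \<rho> t"
    unfolding s unfolding ratio_density_def C_def A_def X_def[symmetric] using gM gE r
    by (simp add: mult.commute)
qed

lemma nn_integral_ratio_kernel:
  assumes gM: "gM > 0" and gE: "gE > 0" and r: "0 \<le> \<rho>" "\<rho> < 1"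
  shows "(\<integral>\<^sup>+\<theta>. \<integral>\<^sup>+w. indicator {0<..} w * ennreal w * ennreal (ratio_kernel gM gE \<rho> t w \<theta>)
            * indicator {0..2*pi} \<theta> \<partial>lborel \<partial>lborel)
         = ennreal (ratio_density (1 / gM) (1 / gE) \<rho> t) * indicator {0..} t"
proof (cases "t \<ge> 0")
  case False
  then show ?thesis by (simp add: ratio_kernel_def)
next
  case True
  define A where "A = (t / gM + 1 / gE) / (1 - \<rho>)"
  define B where "B = 2 / (1 - \<rho>) * sqrt (\<rho> * t / (gM * gE))"
  define C where "C = 1 / (gM * gE * (1 - \<rho>)) / (2 * pi)"
  note coeffs = ratio_kernel_coeffs[OF gM gE r True, folded A_def B_def C_def]
  have C: "C > 0" unfolding C_def using gM gE r by simp
  have "(\<integral>\<^sup>+w. indicator {0<..} w * ennreal w * ennreal (ratio_kernel gM gE \<rho> t w \<theta>)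
            * indicator {0..2*pi} \<theta> \<partial>lborel)
      = ennreal C * (ennreal (1 / (A - B * cos \<theta>)^2) * indicator {0..2*pi} \<theta>)" for \<theta>
  proof -
    have "(\<integral>\<^sup>+w. indicator {0<..} w * ennreal w * ennreal (ratio_kernel gM gE \<rho> t w \<theta>)
            * indicator {0..2*pi} \<theta> \<partial>lborel)
      = (\<integral>\<^sup>+w. (ennreal C * indicator {0..2*pi} \<theta>)
            * (ennreal (w * exp (- (A - B * cos \<theta>) * w)) * indicator {0..} w) \<partial>lborel)"
      using C coeffs(1)
      by (intro nn_integral_cong_AE, use AE_lborel_singleton[of 0] in eventually_elim)
        (auto simp: ennreal_mult[symmetric] mult_ac split: split_indicator)
    also have "\<dots> = ennreal C * indicator {0..2*pi} \<theta>
        * (\<integral>\<^sup>+w. ennreal (w * exp (- (A - B * cos \<theta>) * w)) * indicator {0..} w \<partial>lborel)"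
      by (rule nn_integral_cmult) measurable
    also have "\<dots> = ennreal C * indicator {0..2*pi} \<theta> * ennreal (1 / (A - B * cos \<theta>)^2)"
      by (simp only: nn_integral_mult_exp_neg[OF A_minus_B_cos_pos[OF coeffs(2)]])
    finally show ?thesis by (simp add: mult_ac)
  qed
  then have "(\<integral>\<^sup>+\<theta>. \<integral>\<^sup>+w. indicator {0<..} w * ennreal w * ennreal (ratio_kernel gM gE \<rho> t w \<theta>)
            * indicator {0..2*pi} \<theta> \<partial>lborel \<partial>lborel)
      = ennreal C * ennreal (2 * pi * A / (sqrt (A^2 - B^2))^3)"
    by (simp add: nn_integral_cmult nn_integral_inverse_A_minus_B_cos_sq[OF coeffs(2)])
  also have "\<dots> = ennreal (ratio_density (1 / gM) (1 / gE) \<rho> t)"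
    unfolding coeffs(3)[symmetric] using C by (simp only: ennreal_mult' less_imp_le)
  finally show ?thesis using True by simp
qed

lemma nn_integral_gains_distr_kernel:
  assumes gM: "gM > 0" and gE: "gE > 0" and r: "\<rho> < 1"
    and [measurable]: "\<Phi> \<in> borel_measurable borel"
  shows "(\<integral>\<^sup>+h. \<Phi> h \<partial>gains_distr gM gE \<rho>) = (\<integral>\<^sup>+w. \<integral>\<^sup>+u. \<Phi> (u, w) *
           (\<integral>\<^sup>+\<theta>. ennreal (rayleigh_kernel gM gE \<rho> (u, w) \<theta>) * indicator {0..2*pi} \<theta> \<partial>lborel)
           \<partial>lborel \<partial>lborel)"
proof -
  have "(\<integral>\<^sup>+h. \<Phi> h \<partial>gains_distr gM gE \<rho>) = (\<integral>\<^sup>+h. \<Phi> h *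
      (\<integral>\<^sup>+\<theta>. ennreal (rayleigh_kernel gM gE \<rho> h \<theta>) * indicator {0..2*pi} \<theta> \<partial>lborel) \<partial>lborel)"
    unfolding gains_distr_def using rayleigh_density_measurable[OF gM gE r]
    by (simp add: nn_integral_density rayleigh_density_eq_nn_integral_kernel[OF gM gE r] mult.commute)
  also have "\<dots> = (\<integral>\<^sup>+w. \<integral>\<^sup>+u. \<Phi> (u, w) *
      (\<integral>\<^sup>+\<theta>. ennreal (rayleigh_kernel gM gE \<rho> (u, w) \<theta>) * indicator {0..2*pi} \<theta> \<partial>lborel)
      \<partial>lborel \<partial>lborel)"
  proof -
    have "(\<lambda>h. \<Phi> h * (\<integral>\<^sup>+\<theta>. ennreal (rayleigh_kernel gM gE \<rho> h \<theta>) * indicator {0..2*pi} \<theta> \<partial>lborel))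
        \<in> borel_measurable (lborel \<Otimes>\<^sub>M lborel)"
      unfolding lborel_prod by measurable
    from lborel_pair.nn_integral_snd[OF this] show ?thesis
      unfolding lborel_prod by simp
  qed
  finally show ?thesis .
qed

lemma nn_integral_gains_distr_ratio_coords:
  assumes gM: "gM > 0" and gE: "gE > 0" and r: "\<rho> < 1"
    and [measurable]: "\<Phi> \<in> borel_measurable borel"
  shows "(\<integral>\<^sup>+h. \<Phi> h \<partial>gains_distr gM gE \<rho>) = (\<integral>\<^sup>+t. \<integral>\<^sup>+w. \<integral>\<^sup>+\<theta>. \<Phi> (t * w, w) *
           (indicator {0<..} w * ennreal w * ennreal (ratio_kernel gM gE \<rho> t w \<theta>) * indicator {0..2*pi} \<theta>)
           \<partial>lborel \<partial>lborel \<partial>lborel)"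
proof -
  have [measurable]: "(\<lambda>x. \<Phi> (f x, g x)) \<in> borel_measurable M"
    if [measurable]: "f \<in> borel_measurable M" "g \<in> borel_measurable M" for f g :: "'z \<Rightarrow> real" and M
  proof -
    have "(\<lambda>x. (f x, g x)) \<in> M \<rightarrow>\<^sub>M borel" unfolding borel_prod[symmetric] by measurable
    then show ?thesis by measurable
  qed
  have inner: "(\<integral>\<^sup>+u. \<Phi> (u, w) *
        (\<integral>\<^sup>+\<theta>. ennreal (rayleigh_kernel gM gE \<rho> (u, w) \<theta>) * indicator {0..2*pi} \<theta> \<partial>lborel) \<partial>lborel)
      = (\<integral>\<^sup>+t. \<integral>\<^sup>+\<theta>. \<Phi> (t * w, w) *
        (indicator {0<..} w * ennreal w * ennreal (ratio_kernel gM gE \<rho> t w \<theta>) * indicator {0..2*pi} \<theta>)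
        \<partial>lborel \<partial>lborel)" if "w \<noteq> 0" for w
  proof (cases "w > 0")
    case True
    have "(\<integral>\<^sup>+u. \<Phi> (u, w) *
        (\<integral>\<^sup>+\<theta>. ennreal (rayleigh_kernel gM gE \<rho> (u, w) \<theta>) * indicator {0..2*pi} \<theta> \<partial>lborel) \<partial>lborel)
      = ennreal w * (\<integral>\<^sup>+t. \<Phi> (t * w, w) *
        (\<integral>\<^sup>+\<theta>. ennreal (ratio_kernel gM gE \<rho> t w \<theta>) * indicator {0..2*pi} \<theta> \<partial>lborel) \<partial>lborel)"
      \<comment> \<open>substitute \<open>u = t * w\<close>, with Jacobian \<open>w\<close>\<close>
      using True
      by (subst nn_integral_real_affine[where t = 0 and c = w])
        (simp_all add: mult.commute[of w] rayleigh_kernel_ratio_coords)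
    also have "\<dots> = (\<integral>\<^sup>+t. \<integral>\<^sup>+\<theta>. \<Phi> (t * w, w) *
        (indicator {0<..} w * ennreal w * ennreal (ratio_kernel gM gE \<rho> t w \<theta>) * indicator {0..2*pi} \<theta>)
        \<partial>lborel \<partial>lborel)"
      using True by (simp add: nn_integral_cmult[symmetric] mult_ac)
    finally show ?thesis .
  next
    case False
    then have "w < 0" using that by simp
    then show ?thesis by (simp add: rayleigh_kernel_def)
  qed
  have "(\<integral>\<^sup>+h. \<Phi> h \<partial>gains_distr gM gE \<rho>) = (\<integral>\<^sup>+w. \<integral>\<^sup>+t. \<integral>\<^sup>+\<theta>. \<Phi> (t * w, w) *
      (indicator {0<..} w * ennreal w * ennreal (ratio_kernel gM gE \<rho> t w \<theta>) * indicator {0..2*pi} \<theta>)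
      \<partial>lborel \<partial>lborel \<partial>lborel)"
    unfolding nn_integral_gains_distr_kernel[OF gM gE r assms(4)]
    by (intro nn_integral_cong_AE, use AE_lborel_singleton[of 0] in eventually_elim) (simp add: inner)
  also have "\<dots> = (\<integral>\<^sup>+t. \<integral>\<^sup>+w. \<integral>\<^sup>+\<theta>. \<Phi> (t * w, w) *
      (indicator {0<..} w * ennreal w * ennreal (ratio_kernel gM gE \<rho> t w \<theta>) * indicator {0..2*pi} \<theta>)
      \<partial>lborel \<partial>lborel \<partial>lborel)"
    by (rule lborel_pair.Fubini') measurable
  finally show ?thesis .
qed

lemma nn_integral_gains_distr_scale_invariant:
  fixes \<Phi> :: "real \<times> real \<Rightarrow> ennreal" and \<phi> :: "real \<Rightarrow> ennreal"
  assumes gM: "gM > 0" and gE: "gE > 0" and r: "0 \<le> \<rho>" "\<rho> < 1"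
    and [measurable]: "\<Phi> \<in> borel_measurable borel" "\<phi> \<in> borel_measurable borel"
    and scale: "\<And>t w. w > 0 \<Longrightarrow> \<Phi> (t * w, w) = \<phi> t"
  shows "(\<integral>\<^sup>+h. \<Phi> h \<partial>gains_distr gM gE \<rho>)
         = (\<integral>\<^sup>+t. \<phi> t * ennreal (ratio_density (1 / gM) (1 / gE) \<rho> t) * indicator {0..} t \<partial>lborel)"
proof -
  have "(\<integral>\<^sup>+w. \<integral>\<^sup>+\<theta>. \<Phi> (t * w, w) *
      (indicator {0<..} w * ennreal w * ennreal (ratio_kernel gM gE \<rho> t w \<theta>) * indicator {0..2*pi} \<theta>)
      \<partial>lborel \<partial>lborel) = \<phi> t * ennreal (ratio_density (1 / gM) (1 / gE) \<rho> t) * indicator {0..} t" for t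
  proof -
    have "(\<integral>\<^sup>+w. \<integral>\<^sup>+\<theta>. \<Phi> (t * w, w) *
        (indicator {0<..} w * ennreal w * ennreal (ratio_kernel gM gE \<rho> t w \<theta>) * indicator {0..2*pi} \<theta>)
        \<partial>lborel \<partial>lborel)
      = (\<integral>\<^sup>+w. \<integral>\<^sup>+\<theta>. \<phi> t *
        (indicator {0<..} w * ennreal w * ennreal (ratio_kernel gM gE \<rho> t w \<theta>) * indicator {0..2*pi} \<theta>)
        \<partial>lborel \<partial>lborel)"
      by (intro nn_integral_cong) (simp add: scale split: split_indicator)
    also have "\<dots> = \<phi> t * (\<integral>\<^sup>+\<theta>. \<integral>\<^sup>+w. indicator {0<..} w * ennreal w * ennreal (ratio_kernel gM gE \<rho> t w \<theta>)
        * indicator {0..2*pi} \<theta> \<partial>lborel \<partial>lborel)"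
      by (subst lborel_pair.Fubini') (simp_all add: nn_integral_cmult)
    finally show ?thesis
      unfolding nn_integral_ratio_kernel[OF gM gE r] by (simp add: mult.assoc)
  qed
  then show ?thesis
    by (simp add: nn_integral_gains_distr_ratio_coords[OF gM gE r(2) assms(5)])
qed

lemma AE_gains_distr_snd_pos:
  assumes gM: "gM > 0" and gE: "gE > 0" and r: "\<rho> < 1"
  shows "AE h in gains_distr gM gE \<rho>. 0 < snd h"
proof -
  have "(UNIV :: real set) \<times> {0} \<in> null_sets (lborel \<Otimes>\<^sub>M lborel)"
    by (simp add: lborel.emeasure_pair_measure_Times null_sets_def)
  then have "AE h in (lborel :: (real \<times> real) measure). snd h \<noteq> 0"
    unfolding lborel_prod[symmetric] by (rule AE_I') auto
  then show ?thesis
    unfolding gains_distr_def using rayleigh_density_measurable[OF gM gE r]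
    by (subst AE_density) (auto elim!: AE_mp simp: rayleigh_density_def)
qed

lemma emeasure_gains_distr_UNIV:
  assumes gM: "gM > 0" and gE: "gE > 0" and r: "0 \<le> \<rho>" "\<rho> < 1"
  shows "emeasure (gains_distr gM gE \<rho>) UNIV = 1"
proof -
  have "emeasure (gains_distr gM gE \<rho>) UNIV = (\<integral>\<^sup>+h. 1 \<partial>gains_distr gM gE \<rho>)"
    by (simp add: gains_distr_def)
  also have "\<dots> = (\<integral>\<^sup>+t. 1 * ennreal (ratio_density (1 / gM) (1 / gE) \<rho> t) * indicator {0..} t \<partial>lborel)"
    by (rule nn_integral_gains_distr_scale_invariant[OF gM gE r]) auto
  also have "\<dots> = 1"
    using gM gE r by (simp add: nn_integral_ratio_density)
  finally show ?thesis .
qed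

lemma ratio_limit_kappa_form:
  fixes a e \<rho> :: real
  assumes a: "a > 0" and e: "e > 0"
  defines "\<kappa> \<equiv> e / a"
  shows "(a + e + sqrt ((a + e)^2 - 4 * \<rho> * a * e)) / (2 * a)
         = (1 + \<kappa>) * (1/2 + sqrt (1/4 - \<rho> * \<kappa> / (1 + \<kappa>)^2))"
proof -
  have k: "\<kappa> > 0" unfolding \<kappa>_def using a e by simp
  have "(1 + \<kappa>) * sqrt (1/4 - \<rho> * \<kappa> / (1 + \<kappa>)^2) = sqrt ((1 + \<kappa>)^2 * (1/4 - \<rho> * \<kappa> / (1 + \<kappa>)^2))"
    using k by (simp add: real_sqrt_mult)
  also have "(1 + \<kappa>)^2 * (1/4 - \<rho> * \<kappa> / (1 + \<kappa>)^2) = (1 + \<kappa>)^2 / 4 - \<rho> * \<kappa>"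
    using k by (simp add: field_simps)
  also have "\<dots> = ((a + e)^2 - 4 * \<rho> * a * e) / (2 * a)^2"
    unfolding \<kappa>_def using a by (simp add: field_simps power2_eq_square)
  also have "sqrt (((a + e)^2 - 4 * \<rho> * a * e) / (2 * a)^2) = sqrt ((a + e)^2 - 4 * \<rho> * a * e) / (2 * a)"
  proof -
    have "sqrt ((2 * a)^2) = 2 * a" using a by (simp only: real_sqrt_abs)
    then show ?thesis by (simp only: real_sqrt_divide)
  qed
  finally have s: "(1 + \<kappa>) * sqrt (1/4 - \<rho> * \<kappa> / (1 + \<kappa>)^2)
      = sqrt ((a + e)^2 - 4 * \<rho> * a * e) / (2 * a)" .
  have h: "(1 + \<kappa>) / 2 = (a + e) / (2 * a)" unfolding \<kappa>_def using a by (simp add: field_simps)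
  have "(1 + \<kappa>) * (1/2 + sqrt (1/4 - \<rho> * \<kappa> / (1 + \<kappa>)^2))
      = (1 + \<kappa>) / 2 + (1 + \<kappa>) * sqrt (1/4 - \<rho> * \<kappa> / (1 + \<kappa>)^2)"
    by (simp add: algebra_simps)
  also have "\<dots> = (a + e + sqrt ((a + e)^2 - 4 * \<rho> * a * e)) / (2 * a)"
    unfolding s h by (simp add: add_divide_distrib)
  finally show ?thesis ..
qed

lemma log_ratio_limit_kappa_form:
  fixes a e \<rho> b :: real
  assumes a: "a > 0" and e: "e > 0" and r: "0 \<le> \<rho>" "\<rho> \<le> 1" and b: "b > 1"
  defines "\<kappa> \<equiv> e / a"
  shows "log b ((a + e + sqrt ((a + e)^2 - 4 * \<rho> * a * e)) / (2 * a))
         = log b (1 + \<kappa>) + log b (1/2 + sqrt (1/4 - \<rho> * \<kappa> / (1 + \<kappa>)^2))"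
proof -
  have k: "\<kappa> > 0" unfolding \<kappa>_def using a e by simp
  moreover have "(1 + \<kappa>)^2 = 4 * \<kappa> + (1 - \<kappa>)^2" by (simp add: power2_eq_square algebra_simps)
  ultimately have "4 * (\<rho> * \<kappa>) \<le> (1 + \<kappa>)^2"
    using r mult_left_le_one_le[of \<kappa> \<rho>] zero_le_power2[of "1 - \<kappa>"] by linarith
  then have "1/2 + sqrt (1/4 - \<rho> * \<kappa> / (1 + \<kappa>)^2) > 0"
    using k by (simp add: add_pos_nonneg)
  then show ?thesis
    unfolding ratio_limit_kappa_form[OF a e, of \<rho>, folded \<kappa>_def] using k b by (simp add: log_mult)
qed

lemma nn_integral_log_ratio:
  fixes b gM gE \<rho> :: real
  assumes b: "b > 1" and gM: "gM > 0" and gE: "gE > 0" and r: "0 \<le> \<rho>" "\<rho> < 1"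
  defines "\<kappa> \<equiv> gM / gE"
  shows "(\<integral>\<^sup>+ h. ennreal (log b (fst h / snd h) * indicator {h. fst h > snd h} h) \<partial>gains_distr gM gE \<rho>)
         = ennreal (log b (1 + \<kappa>) + log b (1/2 + sqrt (1/4 - \<rho> * \<kappa> / (1 + \<kappa>)^2)))"
proof -
  define a where "a = 1 / gM"
  define e where "e = 1 / gE"
  have ae: "a > 0" "e > 0" using gM gE by (auto simp: a_def e_def)
  have lb: "ln b > 0" using b by simp
  have "(\<integral>\<^sup>+ h. ennreal (log b (fst h / snd h) * indicator {h. fst h > snd h} h) \<partial>gains_distr gM gE \<rho>)
     = (\<integral>\<^sup>+t. ennreal (log b t * indicator {1<..} t) * ennreal (ratio_density a e \<rho> t) * indicator {0..} t \<partial>lborel)"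
    unfolding a_def e_def
  proof (rule nn_integral_gains_distr_scale_invariant[OF gM gE r])
    have "(\<lambda>h. ennreal (log b (fst h / snd h) * indicator {h. fst h > snd h} h))
        \<in> borel_measurable (borel \<Otimes>\<^sub>M borel)"
      by measurable
    then show "(\<lambda>h. ennreal (log b (fst h / snd h) * indicator {h. fst h > snd h} h)) \<in> borel_measurable borel"
      unfolding borel_prod .
  qed (auto simp: indicator_def)
  also have "\<dots> = (\<integral>\<^sup>+t. ennreal (1 / ln b) * (ennreal (ln t * ratio_density a e \<rho> t) * indicator {1..} t) \<partial>lborel)"
  proof (intro nn_integral_cong)
    fix t :: real
    show "ennreal (log b t * indicator {1<..} t) * ennreal (ratio_density a e \<rho> t) * indicator {0..} t
        = ennreal (1 / ln b) * (ennreal (ln t * ratio_density a e \<rho> t) * indicator {1..} t)"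
    proof (cases "t > 1")
      case True
      then show ?thesis
        using ratio_density_nonneg[OF ae r(2), of t] lb
        by (simp add: ennreal_mult[symmetric] log_def)
    next
      case False
      then show ?thesis by (cases "t = 1") (auto simp: indicator_def)
    qed
  qed
  also have "\<dots> = ennreal (1 / ln b) * (\<integral>\<^sup>+t. ennreal (ln t * ratio_density a e \<rho> t) * indicator {1..} t \<partial>lborel)"
    by (rule nn_integral_cmult) measurable
  also have "\<dots> = ennreal (1 / ln b) * ennreal (ln ((a + e + sqrt ((a + e)^2 - 4 * \<rho> * a * e)) / (2 * a)))"
    by (simp only: nn_integral_ln_ratio_density[OF ae r])
  also have "\<dots> = ennreal (log b ((a + e + sqrt ((a + e)^2 - 4 * \<rho> * a * e)) / (2 * a)))"
    using lb by (simp add: ennreal_mult'[symmetric] log_def)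
  also have "\<dots> = ennreal (log b (1 + \<kappa>) + log b (1/2 + sqrt (1/4 - \<rho> * \<kappa> / (1 + \<kappa>)^2)))"
    using log_ratio_limit_kappa_form[OF ae r(1) _ b] r(2) gM gE by (simp add: \<kappa>_def a_def e_def)
  finally show ?thesis .
qed

lemma log_gain_le_log_ratio:
  fixes x y p b :: real
  assumes "y < x" "0 < y" "0 \<le> p" "1 < b"
  shows "log b (1 + x * p) - log b (1 + y * p) \<le> log b (x / y)"
proof -
  have p: "1 + x * p > 0" "1 + y * p > 0" using assms by (auto intro: add_pos_nonneg)
  have "(1 + x * p) / (1 + y * p) \<le> x / y"
    using p assms by (simp add: divide_simps) (simp add: algebra_simps)
  moreover have "log b (1 + x * p) - log b (1 + y * p) = log b ((1 + x * p) / (1 + y * p))"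
    using p assms by (simp add: log_divide)
  ultimately show ?thesis
    using p assms by simp
qed

lemma log_gain_mono:
  fixes x y p q b :: real
  assumes "y < x" "0 < y" "1 < b" "0 \<le> p" "p \<le> q"
  shows "log b (1 + x * p) - log b (1 + y * p) \<le> log b (1 + x * q) - log b (1 + y * q)"
proof -
  have pos: "1 + x * p > 0" "1 + y * p > 0" "1 + x * q > 0" "1 + y * q > 0"
    using assms by (auto intro: add_pos_nonneg)
  have "(x - y) * (q - p) \<ge> 0" using assms by simp
  then have "(1 + x * p) / (1 + y * p) \<le> (1 + x * q) / (1 + y * q)"
    using pos by (simp add: divide_simps) (simp add: algebra_simps)
  moreover have "log b (1 + x * p) - log b (1 + y * p) = log b ((1 + x * p) / (1 + y * p))"
    and "log b (1 + x * q) - log b (1 + y * q) = log b ((1 + x * q) / (1 + y * q))"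
    using pos assms by (simp_all add: log_divide)
  ultimately show ?thesis
    using pos assms by simp
qed

lemma log_gain_tendsto:
  fixes x y b :: real
  assumes "y < x" "0 < y" "1 < b"
  shows "((\<lambda>n. log b (1 + x * real n) - log b (1 + y * real n)) \<longlongrightarrow> log b (x / y)) sequentially"
proof -
  have "((\<lambda>n. ln (1 + x * real n) / ln b - ln (1 + y * real n) / ln b) \<longlongrightarrow> ln x * inverse (ln b) - ln y * inverse (ln b)) sequentially"
    using assms by real_asymp
  moreover have "ln x * inverse (ln b) - ln y * inverse (ln b) = ln (x / y) / ln b"
    using assms by (simp add: ln_divide_pos field_simps)
  ultimately show ?thesis
    by (simp add: log_def)
qed

lemma secrecy_capacity_le_log_ratio:
  assumes b: "b > 1" and gM: "gM > 0" and gE: "gE > 0" and r: "\<rho> < 1"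
  shows "secrecy_capacity b gM gE \<rho> Pbar \<le>
    (\<integral>\<^sup>+ h. ennreal (log b (fst h / snd h) * indicator {h. fst h > snd h} h) \<partial>gains_distr gM gE \<rho>)"
  unfolding secrecy_capacity_def
proof (rule SUP_least)
  fix P assume "P \<in> power_allocs gM gE \<rho> Pbar"
  then have P: "0 \<le> P h" for h unfolding power_allocs_def by blast
  show "(\<integral>\<^sup>+ h. ennreal ((log b (1 + fst h * P h) - log b (1 + snd h * P h)) * indicator {h. fst h > snd h} h)
          \<partial>gains_distr gM gE \<rho>)
      \<le> (\<integral>\<^sup>+ h. ennreal (log b (fst h / snd h) * indicator {h. fst h > snd h} h) \<partial>gains_distr gM gE \<rho>)"
    using AE_gains_distr_snd_pos[OF gM gE r]
    by (intro nn_integral_mono_AE, elim AE_mp)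
      (auto intro!: AE_I2 ennreal_leI log_gain_le_log_ratio b P split: split_indicator)
qed

lemma const_alloc_le_secrecy_capacity:
  assumes gM: "gM > 0" and gE: "gE > 0" and r: "0 \<le> \<rho>" "\<rho> < 1" and p: "0 \<le> p" "p \<le> Pbar"
  shows "(\<integral>\<^sup>+ h. ennreal ((log b (1 + fst h * p) - log b (1 + snd h * p)) * indicator {h. fst h > snd h} h)
            \<partial>gains_distr gM gE \<rho>) \<le> secrecy_capacity b gM gE \<rho> Pbar"
proof -
  have "(\<lambda>_. p) \<in> power_allocs gM gE \<rho> Pbar"
    using p emeasure_gains_distr_UNIV[OF gM gE r]
    by (simp add: power_allocs_def nn_integral_const gains_distr_def)
  then show ?thesis
    unfolding secrecy_capacity_def by (rule SUP_upper2) simp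
qed

lemma SUP_const_alloc_eq_log_ratio:
  assumes b: "b > 1" and gM: "gM > 0" and gE: "gE > 0" and r: "\<rho> < 1"
  shows "(SUP n. \<integral>\<^sup>+ h. ennreal ((log b (1 + fst h * real n) - log b (1 + snd h * real n))
            * indicator {h. fst h > snd h} h) \<partial>gains_distr gM gE \<rho>)
       = (\<integral>\<^sup>+ h. ennreal (log b (fst h / snd h) * indicator {h. fst h > snd h} h) \<partial>gains_distr gM gE \<rho>)"
    (is "(SUP n. integral\<^sup>N ?M (?Q n)) = integral\<^sup>N ?M ?L")
proof -
  define f where "f n h = ?Q n h * indicator {h. 0 < snd h} h" for n h
  have AE: "AE h in ?M. 0 < snd h" by (rule AE_gains_distr_snd_pos[OF gM gE r])
  have "integral\<^sup>N ?M (?Q n) = integral\<^sup>N ?M (f n)" for n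
    using AE by (intro nn_integral_cong_AE) (auto simp: f_def)
  moreover have "integral\<^sup>N ?M ?L = (\<integral>\<^sup>+h. ?L h * indicator {h. 0 < snd h} h \<partial>?M)"
    using AE by (intro nn_integral_cong_AE) auto
  moreover have "incseq f"
    by (auto intro!: incseq_SucI le_funI ennreal_leI log_gain_mono b simp: f_def split: split_indicator)
  moreover have "f n \<in> borel_measurable ?M" for n
  proof -
    have "f n \<in> borel_measurable (borel \<Otimes>\<^sub>M borel)" unfolding f_def by measurable
    then show ?thesis unfolding borel_prod gains_distr_def by simp
  qed
  moreover have "(SUP n. f n h) = ?L h * indicator {h. 0 < snd h} h" for h
  proof (cases "0 < snd h \<and> snd h < fst h")
    case True
    have "(\<lambda>n. f n h) \<longlonglongrightarrow> ?L h * indicator {h. 0 < snd h} h"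
      unfolding f_def using True by (simp add: tendsto_ennrealI log_gain_tendsto b)
    moreover have "(\<lambda>n. f n h) \<longlonglongrightarrow> (SUP n. f n h)"
      using \<open>incseq f\<close> by (intro LIMSEQ_SUP monoI) (metis le_funD monoD)
    ultimately show ?thesis using LIMSEQ_unique by blast
  next
    case False
    then show ?thesis by (auto simp: f_def indicator_def)
  qed
  ultimately show ?thesis
    by (simp add: nn_integral_monotone_convergence_SUP[symmetric])
qed

lemma secrecy_capacity_tendsto:
  assumes b: "b > 1" and gM: "gM > 0" and gE: "gE > 0" and r: "0 \<le> \<rho>" "\<rho> < 1"
  shows "((\<lambda>Pbar. secrecy_capacity b gM gE \<rho> Pbar) \<longlongrightarrow>
           (\<integral>\<^sup>+ h. ennreal (log b (fst h / snd h) * indicator {h. fst h > snd h} h) \<partial>gains_distr gM gE \<rho>)) at_top"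
    (is "(_ \<longlongrightarrow> ?L) at_top")
proof (rule order_tendstoI)
  fix c assume "c < ?L"
  then obtain n :: nat where n: "c < (\<integral>\<^sup>+ h. ennreal ((log b (1 + fst h * real n) - log b (1 + snd h * real n))
      * indicator {h. fst h > snd h} h) \<partial>gains_distr gM gE \<rho>)"
    unfolding SUP_const_alloc_eq_log_ratio[OF b gM gE r(2), symmetric] less_SUP_iff by blast
  show "eventually (\<lambda>Pbar. c < secrecy_capacity b gM gE \<rho> Pbar) at_top"
    unfolding eventually_at_top_linorder
    by (intro exI[of _ "real n"] allI impI less_le_trans[OF n] const_alloc_le_secrecy_capacity[OF gM gE r])
      auto
next
  fix c assume "?L < c"
  then show "eventually (\<lambda>Pbar. secrecy_capacity b gM gE \<rho> Pbar < c) at_top"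
    using secrecy_capacity_le_log_ratio[OF b gM gE r(2)]
    by (intro always_eventually allI) (rule le_less_trans)
qed

theorem theorem2:
  fixes b gM gE \<rho> :: real
  assumes "b > 1" and "gM > 0" and "gE > 0" and "0 \<le> \<rho>" and "\<rho> < 1"
  defines "\<kappa> \<equiv> gM / gE"
  shows "((\<lambda>Pbar. secrecy_capacity b gM gE \<rho> Pbar) \<longlongrightarrow>
            ennreal (log b (1 + \<kappa>) + log b (1/2 + sqrt (1/4 - \<rho> * \<kappa> / (1 + \<kappa>)^2))))
           at_top \<and>
         (\<integral>\<^sup>+ h. ennreal (log b (fst h / snd h) * indicator {h. fst h > snd h} h)
            \<partial>gains_distr gM gE \<rho>)
         = ennreal (log b (1 + \<kappa>) + log b (1/2 + sqrt (1/4 - \<rho> * \<kappa> / (1 + \<kappa>)^2)))"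
  using secrecy_capacity_tendsto[OF assms(1-5)] nn_integral_log_ratio[OF assms(1-5)]
  unfolding \<kappa>_def by simp

end
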